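(* Every tree (in which every nontrivial pseudo-supremum is a supremum) that is normal in the interval topology is countably paracompact.
   Context: A tree is a partially ordered set in which the set of predecessors of each element is well-ordered. For a nonempty chain bounded above, its pseudo-supremum is the set of its minimal upper bounds; standing assumption: each such set is a singleton. The interval topology has as base all sets $(s,t]=\{x:s<x\le t\}$ together with all singletons $\{t\}$ with $t$ minimal. A space is countably paracompact if every countable open cover has a locally finite open refinement. *)

theory Defs
  imports "HOL-Analysis.Analysis"
begin

definition poset_on :: "'a set \<Rightarrow> ('a \<Rightarrow> 'a \<Rightarrow> bool) \<Rightarrow> bool" where
  "poset_on T le \<longleftrightarrow>
     (\<forall>x\<in>T. le x x) \<and>
     (\<forall>x\<in>T. \<forall>y\<in>T. le x y \<and> le y x \<longrightarrow> x = y) \<and>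
     (\<forall>x\<in>T. \<forall>y\<in>T. \<forall>z\<in>T. le x y \<and> le y z \<longrightarrow> le x z)"

definition strict :: "('a \<Rightarrow> 'a \<Rightarrow> bool) \<Rightarrow> 'a \<Rightarrow> 'a \<Rightarrow> bool" where
  "strict le x y \<longleftrightarrow> le x y \<and> x \<noteq> y"

definition well_ordered_subset :: "'a set \<Rightarrow> ('a \<Rightarrow> 'a \<Rightarrow> bool) \<Rightarrow> bool" where
  "well_ordered_subset A le \<longleftrightarrow>
     (\<forall>x\<in>A. \<forall>y\<in>A. le x y \<or> le y x) \<and>
     (\<forall>B. B \<subseteq> A \<and> B \<noteq> {} \<longrightarrow> (\<exists>m\<in>B. \<forall>b\<in>B. le m b))"

definition is_tree :: "'a set \<Rightarrow> ('a \<Rightarrow> 'a \<Rightarrow> bool) \<Rightarrow> bool" where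
  "is_tree T le \<longleftrightarrow> poset_on T le \<and>
     (\<forall>t\<in>T. well_ordered_subset {s\<in>T. strict le s t} le)"

definition is_chain :: "'a set \<Rightarrow> ('a \<Rightarrow> 'a \<Rightarrow> bool) \<Rightarrow> 'a set \<Rightarrow> bool" where
  "is_chain T le C \<longleftrightarrow> C \<subseteq> T \<and> (\<forall>x\<in>C. \<forall>y\<in>C. le x y \<or> le y x)"

definition upper_bound :: "'a set \<Rightarrow> ('a \<Rightarrow> 'a \<Rightarrow> bool) \<Rightarrow> 'a set \<Rightarrow> 'a \<Rightarrow> bool" where
  "upper_bound T le C x \<longleftrightarrow> x \<in> T \<and> (\<forall>c\<in>C. le c x)"

definition pseudo_sup :: "'a set \<Rightarrow> ('a \<Rightarrow> 'a \<Rightarrow> bool) \<Rightarrow> 'a set \<Rightarrow> 'a set" where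
  "pseudo_sup T le C =
     {x. upper_bound T le C x \<and> (\<forall>y. upper_bound T le C y \<and> le y x \<longrightarrow> y = x)}"

definition pseudo_sups_are_sups :: "'a set \<Rightarrow> ('a \<Rightarrow> 'a \<Rightarrow> bool) \<Rightarrow> bool" where
  "pseudo_sups_are_sups T le \<longleftrightarrow>
     (\<forall>C. is_chain T le C \<and> C \<noteq> {} \<and> (\<exists>x. upper_bound T le C x) \<longrightarrow>
        (\<exists>s. pseudo_sup T le C = {s}))"

definition minimal_in :: "'a set \<Rightarrow> ('a \<Rightarrow> 'a \<Rightarrow> bool) \<Rightarrow> 'a \<Rightarrow> bool" where
  "minimal_in T le t \<longleftrightarrow> t \<in> T \<and> (\<forall>s\<in>T. le s t \<longrightarrow> s = t)"

definition interval_topology :: "'a set \<Rightarrow> ('a \<Rightarrow> 'a \<Rightarrow> bool) \<Rightarrow> 'a topology" where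
  "interval_topology T le = topology_generated_by
     ({{x\<in>T. strict le s x \<and> le x t} | s t. s \<in> T \<and> t \<in> T} \<union>
      {{t} | t. minimal_in T le t})"

definition countably_paracompact :: "'a topology \<Rightarrow> bool" where
  "countably_paracompact X \<longleftrightarrow>
     (\<forall>\<U>. countable \<U> \<and> (\<forall>U\<in>\<U>. openin X U) \<and> \<Union>\<U> = topspace X \<longrightarrow>
        (\<exists>\<V>. (\<forall>V\<in>\<V>. openin X V) \<and> \<Union>\<V> = topspace X \<and>
             (\<forall>V\<in>\<V>. \<exists>U\<in>\<U>. V \<subseteq> U) \<and> locally_finite_in X \<V>))"

end

theory Submission
  imports Defs
begin

text \<open>
  A normal space is countably paracompact as soon as every decreasing sequence of closed sets
  \<open>F n\<close> with empty intersection has open expansions \<open>G n \<supseteq> F n\<close> with empty intersection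
  (Dowker, Ishikawa): normality shrinks the \<open>G n\<close> to decreasing open \<open>K n \<supseteq> F n\<close> whose closures
  have empty intersection, and for a countable open cover \<open>U n\<close> with \<open>F n = X - (U 0 \<union> \<dots> \<union> U n)\<close>
  the sets \<open>U n \<inter> K 0 \<inter> \<dots> \<inter> K (n - 1)\<close> form a locally finite refinement.

  In a tree every down-set is a well-ordered chain, which forces it to miss some \<open>F n\<close>; the least
  such \<open>n\<close> is a monotone rank \<open>m\<close> with \<open>F n \<subseteq> {m > n}\<close>. The points whose rank \<open>j\<close> exceeds the rank
  of all their predecessors form an antichain, hence a closed set, disjoint from the closed set
  \<open>{m > j}\<close>; normality separates the two, and the separating neighbourhoods \<open>Q j\<close> can be made
  pairwise disjoint. Then \<open>G n = {m > n} \<union> (\<Union>j > n. Q j)\<close> is open, since a point \<open>y\<close> with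
  \<open>m y > n\<close> either has a predecessor of rank greater than \<open>n\<close> or lies in \<open>Q (m y)\<close>, and no point
  lies in every \<open>G n\<close>, as it would lie in two different \<open>Q j\<close>.
\<close>

lemma locally_finite_in_range_if_eventually_in_closures:
  assumes "\<Union>(range V) \<subseteq> topspace X" and "decseq K"
    and "\<And>n. V (Suc n) \<subseteq> K n"
    and "\<Inter>(range (\<lambda>n. X closure_of K n)) = {}"
  shows "locally_finite_in X (range V)"
  unfolding locally_finite_in_def
proof (intro conjI ballI)
  show "\<Union>(range V) \<subseteq> topspace X" by (fact assms(1))
  fix x assume "x \<in> topspace X"
  obtain N where N: "x \<notin> X closure_of K N" using assms(4) by blast
  let ?O = "topspace X - X closure_of K N"
  have "{U \<in> range V. U \<inter> ?O \<noteq> {}} \<subseteq> V ` {..N}"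
  proof clarify
    fix n assume meets: "V n \<inter> ?O \<noteq> {}"
    show "V n \<in> V ` {..N}"
    proof (cases "n \<le> N")
      case False
      then obtain k where k: "n = Suc k" "N \<le> k" by (cases n) auto
      have "V n \<subseteq> topspace X \<inter> K N"
        using assms(1-3) k unfolding decseq_def by blast
      also have "\<dots> \<subseteq> X closure_of K N" by (rule closure_of_subset_Int)
      finally show ?thesis using meets by blast
    qed simp
  qed
  then have "finite {U \<in> range V. U \<inter> ?O \<noteq> {}}" by (rule finite_subset) simp
  moreover have "openin X ?O" by (intro openin_diff) auto
  ultimately show "\<exists>W. openin X W \<and> x \<in> W \<and> finite {U \<in> range V. U \<inter> W \<noteq> {}}"
    using \<open>x \<in> topspace X\<close> N by blast
qed

lemma countably_paracompact_if_closure_shrinkings: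
  assumes shrink: "\<And>F. \<lbrakk>\<And>n. closedin X (F n); decseq F; \<Inter>(range F) = {}\<rbrakk> \<Longrightarrow>
      \<exists>K. (\<forall>n. openin X (K n)) \<and> decseq K \<and> (\<forall>n. F n \<subseteq> K n) \<and>
          \<Inter>(range (\<lambda>n. X closure_of K n)) = {}"
  shows "countably_paracompact X"
  unfolding countably_paracompact_def
proof (intro allI impI)
  fix \<U> assume "countable \<U> \<and> (\<forall>U\<in>\<U>. openin X U) \<and> \<Union>\<U> = topspace X"
  then have "countable \<U>" and open_\<U>: "\<forall>U\<in>\<U>. openin X U" and cover_\<U>: "\<Union>\<U> = topspace X"
    by auto
  show "\<exists>\<V>. (\<forall>V\<in>\<V>. openin X V) \<and> \<Union>\<V> = topspace X \<and>
          (\<forall>V\<in>\<V>. \<exists>U\<in>\<U>. V \<subseteq> U) \<and> locally_finite_in X \<V>"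
  proof (cases "\<U> = {}")
    case True
    then show ?thesis
      using cover_\<U> by (intro exI[of _ "{}"]) (auto simp: locally_finite_in_def)
  next
    case False
    define U where "U = from_nat_into \<U>"
    have range_U: "range U = \<U>" using False \<open>countable \<U>\<close> by (simp add: U_def)
    have open_U: "openin X (U n)" for n using open_\<U> range_U by blast
    define F where "F n = topspace X - (\<Union>i\<le>n. U i)" for n
    have closed_F: "closedin X (F n)" for n
      unfolding F_def using open_U by (intro closedin_diff closedin_topspace openin_Union) blast
    have "decseq F" unfolding F_def decseq_def by auto
    have "\<Inter>(range F) = {}"
    proof (rule equals0I)
      fix x assume "x \<in> \<Inter>(range F)"
      then have "x \<in> topspace X" and "\<And>n. x \<notin> U n" unfolding F_def by auto
      then show False using cover_\<U> range_U by blast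
    qed
    from shrink[OF closed_F \<open>decseq F\<close> this] obtain K where open_K: "\<forall>n. openin X (K n)"
      and "decseq K" and F_K: "\<forall>n. F n \<subseteq> K n"
      and closures_K: "\<Inter>(range (\<lambda>n. X closure_of K n)) = {}"
      by blast
    define V where "V n = U n \<inter> (\<Inter>k<n. K k)" for n
    have open_V: "openin X (V n)" for n
      unfolding V_def using open_U open_K by (intro openin_Int_Inter) auto
    have V_U: "V n \<subseteq> U n" for n unfolding V_def by blast
    have cover_V: "\<Union>(range V) = topspace X"
    proof
      show "\<Union>(range V) \<subseteq> topspace X" using V_U open_U openin_subset by blast
      show "topspace X \<subseteq> \<Union>(range V)"
      proof
        fix x assume x: "x \<in> topspace X"
        from closures_K obtain N where "x \<notin> X closure_of K N" by blast
        then have "\<exists>n. x \<notin> K n" using closure_of_subset_Int[of X "K N"] x by blast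
        then obtain n where "x \<notin> K n" and before_n: "\<And>k. k < n \<Longrightarrow> x \<in> K k"
          using exists_least_iff[of "\<lambda>n. x \<notin> K n"] by blast
        then have "x \<notin> F n" using F_K by blast
        then obtain i where "i \<le> n" "x \<in> U i" using x unfolding F_def by blast
        then have "x \<in> V i" using before_n unfolding V_def by auto
        then show "x \<in> \<Union>(range V)" by blast
      qed
    qed
    have "locally_finite_in X (range V)"
      using cover_V \<open>decseq K\<close> closures_K
      by (intro locally_finite_in_range_if_eventually_in_closures) (auto simp: V_def)
    then show ?thesis
      using open_V cover_V V_U range_U by (intro exI[of _ "range V"]) blast
  qed
qed

lemma normal_space_closure_shrinkings:
  assumes "normal_space X" and "\<And>n. closedin X (F n)" and "decseq F"
    and "\<And>n. openin X (G n)" and "\<And>n. F n \<subseteq> G n" and "\<Inter>(range G) = {}"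
  shows "\<exists>K. (\<forall>n. openin X (K n)) \<and> decseq K \<and> (\<forall>n. F n \<subseteq> K n) \<and>
           \<Inter>(range (\<lambda>n. X closure_of K n)) = {}"
proof -
  have "\<exists>H. openin X H \<and> F n \<subseteq> H \<and> X closure_of H \<subseteq> G n" for n
    using assms(1) assms(2,4,5)[of n] unfolding normal_space_alt by blast
  then obtain H where open_H: "\<And>n. openin X (H n)" and F_H: "\<And>n. F n \<subseteq> H n"
    and closure_H: "\<And>n. X closure_of H n \<subseteq> G n"
    by metis
  define K where "K n = (\<Inter>i\<le>n. H i)" for n
  have "openin X (K n)" for n unfolding K_def using open_H by (intro openin_INT2) auto
  moreover have "decseq K" unfolding K_def decseq_def by auto
  moreover have "F n \<subseteq> K n" for n
    using F_H \<open>decseq F\<close> unfolding K_def decseq_def by fastforce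
  moreover have "X closure_of K n \<subseteq> G n" for n
    using closure_of_mono[of "K n" "H n"] closure_H unfolding K_def by blast
  then have "\<Inter>(range (\<lambda>n. X closure_of K n)) = {}" using assms(6) by blast
  ultimately show ?thesis by blast
qed

lemma countably_paracompact_if_normal_open_expansions:
  assumes normal: "normal_space X"
    and expand: "\<And>F. \<lbrakk>\<And>n. closedin X (F n); decseq F; \<Inter>(range F) = {}\<rbrakk> \<Longrightarrow>
      \<exists>G. (\<forall>n. openin X (G n)) \<and> (\<forall>n. F n \<subseteq> G n) \<and> \<Inter>(range G) = {}"
  shows "countably_paracompact X"
proof (rule countably_paracompact_if_closure_shrinkings)
  fix F assume F: "\<And>n. closedin X (F n)" "decseq F" "\<Inter>(range F) = {}"
  from expand[OF F] obtain G
    where "\<forall>n. openin X (G n)" "\<forall>n. F n \<subseteq> G n" "\<Inter>(range G) = {}"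
    by blast
  then show "\<exists>K. (\<forall>n. openin X (K n)) \<and> decseq K \<and> (\<forall>n. F n \<subseteq> K n) \<and>
       \<Inter>(range (\<lambda>n. X closure_of K n)) = {}"
    by (intro normal_space_closure_shrinkings[OF normal F(1,2), of G]) auto
qed

lemma normal_space_pairwise_disjoint_expansions:
  fixes A B :: "nat \<Rightarrow> 'a set"
  assumes "normal_space X" and "\<And>j. closedin X (A j)" and "\<And>j. closedin X (B j)"
    and "\<And>j. disjnt (A j) (B j)" and "\<And>i j. i < j \<Longrightarrow> A j \<subseteq> B i"
  obtains Q where "\<And>j. openin X (Q j)" "\<And>j. A j \<subseteq> Q j" "\<And>i j. i \<noteq> j \<Longrightarrow> disjnt (Q i) (Q j)"
proof -
  have "\<exists>U V. openin X U \<and> openin X V \<and> A j \<subseteq> U \<and> B j \<subseteq> V \<and> disjnt U V" for j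
    using assms(1) assms(2-4)[of j] unfolding normal_space_def by blast
  then obtain U V where open_U: "\<And>j. openin X (U j)" and open_V: "\<And>j. openin X (V j)"
    and A_U: "\<And>j. A j \<subseteq> U j" and B_V: "\<And>j. B j \<subseteq> V j" and disjnt_UV: "\<And>j. disjnt (U j) (V j)"
    by metis
  define Q where "Q j = U j \<inter> (\<Inter>i<j. V i)" for j
  show ?thesis
  proof
    show "openin X (Q j)" for j
      unfolding Q_def using open_U open_V by (intro openin_Int_Inter) auto
    show "A j \<subseteq> Q j" for j
      unfolding Q_def using A_U B_V assms(5) by fastforce
    have "disjnt (Q i) (Q j)" if "i < j" for i j
      using disjnt_UV[of i] that unfolding Q_def disjnt_def by blast
    then show "disjnt (Q i) (Q j)" if "i \<noteq> j" for i j
      using that by (metis disjnt_sym linorder_neqE_nat)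
  qed
qed

locale tree =
  fixes T :: "'a set" and le :: "'a \<Rightarrow> 'a \<Rightarrow> bool" (infix "\<sqsubseteq>" 50)
  assumes is_tree: "is_tree T le"
begin

abbreviation tree_less :: "'a \<Rightarrow> 'a \<Rightarrow> bool" (infix "\<sqsubset>" 50)
  where "x \<sqsubset> y \<equiv> strict le x y"

abbreviation Ioc :: "'a \<Rightarrow> 'a \<Rightarrow> 'a set"
  where "Ioc s t \<equiv> {x \<in> T. s \<sqsubset> x \<and> x \<sqsubseteq> t}"

abbreviation tree_topology :: "'a topology"
  where "tree_topology \<equiv> interval_topology T le"

lemma tree_refl: "x \<in> T \<Longrightarrow> x \<sqsubseteq> x"
  using is_tree unfolding is_tree_def poset_on_def by blast

lemma tree_antisym: "\<lbrakk>x \<in> T; y \<in> T; x \<sqsubseteq> y; y \<sqsubseteq> x\<rbrakk> \<Longrightarrow> x = y"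
  using is_tree unfolding is_tree_def poset_on_def by blast

lemma tree_trans: "\<lbrakk>x \<in> T; y \<in> T; z \<in> T; x \<sqsubseteq> y; y \<sqsubseteq> z\<rbrakk> \<Longrightarrow> x \<sqsubseteq> z"
  using is_tree unfolding is_tree_def poset_on_def by blast

lemma strict_le_trans: "\<lbrakk>x \<in> T; y \<in> T; z \<in> T; x \<sqsubset> y; y \<sqsubseteq> z\<rbrakk> \<Longrightarrow> x \<sqsubset> z"
  unfolding strict_def by (metis tree_antisym tree_trans)

lemma le_strict_trans: "\<lbrakk>x \<in> T; y \<in> T; z \<in> T; x \<sqsubseteq> y; y \<sqsubset> z\<rbrakk> \<Longrightarrow> x \<sqsubset> z"
  unfolding strict_def by (metis tree_antisym tree_trans)

lemma predecessors_comparable: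
  "\<lbrakk>x \<in> T; a \<in> T; b \<in> T; a \<sqsubset> x; b \<sqsubset> x\<rbrakk> \<Longrightarrow> a \<sqsubseteq> b \<or> b \<sqsubseteq> a"
  using is_tree unfolding is_tree_def well_ordered_subset_def by blast

lemma down_set_has_minimal:
  assumes x: "x \<in> T" and S: "S \<subseteq> {z \<in> T. z \<sqsubseteq> x}" "S \<noteq> {}"
  obtains c where "c \<in> S" "\<And>s. s \<in> S \<Longrightarrow> \<not> s \<sqsubset> c"
proof (cases "{s \<in> S. s \<sqsubset> x} = {}")
  case True
  obtain c where "c \<in> S" using S(2) by blast
  show ?thesis
  proof (rule that[OF \<open>c \<in> S\<close>])
    fix s assume "s \<in> S"
    have "c = x" using True \<open>c \<in> S\<close> S(1) by (auto simp: strict_def)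
    then show "\<not> s \<sqsubset> c" using True \<open>s \<in> S\<close> by blast
  qed
next
  case False
  have "well_ordered_subset {s \<in> T. s \<sqsubset> x} le" using is_tree x unfolding is_tree_def by blast
  then have "\<forall>B. B \<subseteq> {s \<in> T. s \<sqsubset> x} \<and> B \<noteq> {} \<longrightarrow> (\<exists>m\<in>B. \<forall>b\<in>B. m \<sqsubseteq> b)"
    unfolding well_ordered_subset_def by blast
  moreover have "{s \<in> S. s \<sqsubset> x} \<subseteq> {s \<in> T. s \<sqsubset> x}" using S(1) by blast
  ultimately have "\<exists>m\<in>{s \<in> S. s \<sqsubset> x}. \<forall>b\<in>{s \<in> S. s \<sqsubset> x}. m \<sqsubseteq> b"
    using False by blast
  then obtain c where c: "c \<in> S" "c \<sqsubset> x"
    and least: "\<And>b. b \<in> S \<Longrightarrow> b \<sqsubset> x \<Longrightarrow> c \<sqsubseteq> b"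
    by blast
  show ?thesis
  proof (rule that[OF c(1)])
    fix s assume s: "s \<in> S"
    show "\<not> s \<sqsubset> c"
    proof
      assume "s \<sqsubset> c"
      have sT: "s \<in> T" and cT: "c \<in> T" using s c(1) S(1) by auto
      have "s \<sqsubset> x"
        using strict_le_trans[OF sT cT x \<open>s \<sqsubset> c\<close>] c(2) unfolding strict_def by blast
      then have "c \<sqsubseteq> s" using least s by blast
      then show False using tree_antisym[OF sT cT] \<open>s \<sqsubset> c\<close> unfolding strict_def by blast
    qed
  qed
qed

lemma topspace_tree_topology [simp]: "topspace tree_topology = T"
proof -
  have "x \<in> \<Union>({Ioc s t | s t. s \<in> T \<and> t \<in> T} \<union> {{t} | t. minimal_in T le t})"
    if x: "x \<in> T" for x
  proof (cases "minimal_in T le x")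
    case False
    then obtain s where "s \<in> T" "s \<sqsubset> x" using x unfolding minimal_in_def strict_def by blast
    then have "x \<in> Ioc s x" using x tree_refl by blast
    then show ?thesis using \<open>s \<in> T\<close> x by blast
  qed blast
  then show ?thesis
    unfolding interval_topology_def topology_generated_by_topspace minimal_in_def by blast
qed

lemma openin_Ioc: "\<lbrakk>s \<in> T; t \<in> T\<rbrakk> \<Longrightarrow> openin tree_topology (Ioc s t)"
  unfolding interval_topology_def by (rule topology_generated_by_Basis) blast

lemma openin_minimal_singleton: "minimal_in T le t \<Longrightarrow> openin tree_topology {t}"
  unfolding interval_topology_def by (rule topology_generated_by_Basis) blast

lemma openin_contains_Ioc:
  assumes "openin tree_topology U" and "x \<in> U" and "\<not> minimal_in T le x"
  shows "\<exists>s\<in>T. s \<sqsubset> x \<and> Ioc s x \<subseteq> U"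
proof -
  have "generate_topology_on
      ({Ioc s t | s t. s \<in> T \<and> t \<in> T} \<union> {{t} | t. minimal_in T le t}) U"
    using assms(1) unfolding interval_topology_def by (rule openin_topology_generated_by)
  then have "\<forall>x\<in>U. x \<in> T \<longrightarrow> \<not> minimal_in T le x \<longrightarrow> (\<exists>s\<in>T. s \<sqsubset> x \<and> Ioc s x \<subseteq> U)"
  proof induction
    case (Int U1 U2)
    show ?case
    proof (intro ballI impI)
      fix x assume x: "x \<in> U1 \<inter> U2" "x \<in> T" "\<not> minimal_in T le x"
      then obtain s1 s2 where s1: "s1 \<in> T" "s1 \<sqsubset> x" "Ioc s1 x \<subseteq> U1"
        and s2: "s2 \<in> T" "s2 \<sqsubset> x" "Ioc s2 x \<subseteq> U2"
        using Int.IH by blast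
      have "Ioc s2 x \<subseteq> Ioc s1 x" if "s1 \<sqsubseteq> s2"
        using that le_strict_trans[OF s1(1) s2(1)] by blast
      moreover have "Ioc s1 x \<subseteq> Ioc s2 x" if "s2 \<sqsubseteq> s1"
        using that le_strict_trans[OF s2(1) s1(1)] by blast
      ultimately show "\<exists>s\<in>T. s \<sqsubset> x \<and> Ioc s x \<subseteq> U1 \<inter> U2"
        using predecessors_comparable[OF x(2) s1(1) s2(1) s1(2) s2(2)] s1 s2 by blast
    qed
  next
    case (Basis B)
    then show ?case
    proof
      assume "B \<in> {Ioc s t | s t. s \<in> T \<and> t \<in> T}"
      then obtain s t where "s \<in> T" "t \<in> T" "B = Ioc s t" by blast
      then show ?thesis using tree_trans by blast
    qed blast
  qed blast+
  then show ?thesis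
    using assms openin_subset[OF assms(1)] by auto
qed

lemma openin_neighbourhood_below:
  assumes "x \<in> T"
  obtains U where "openin tree_topology U" "x \<in> U" "U \<subseteq> {z \<in> T. z \<sqsubseteq> x}"
proof (cases "minimal_in T le x")
  case True
  then show ?thesis using that openin_minimal_singleton assms tree_refl by blast
next
  case False
  then obtain s where "s \<in> T" "s \<sqsubset> x" using assms unfolding minimal_in_def strict_def by blast
  then show ?thesis using that openin_Ioc assms tree_refl by blast
qed

lemma openin_down_closed:
  assumes "D \<subseteq> T" and "\<And>x z. \<lbrakk>x \<in> D; z \<in> T; z \<sqsubseteq> x\<rbrakk> \<Longrightarrow> z \<in> D"
  shows "openin tree_topology D"
proof (subst openin_subopen, intro ballI)
  fix x assume "x \<in> D"
  then obtain U where "openin tree_topology U" "x \<in> U" "U \<subseteq> {z \<in> T. z \<sqsubseteq> x}"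
    using openin_neighbourhood_below assms(1) by blast
  then show "\<exists>U. openin tree_topology U \<and> x \<in> U \<and> U \<subseteq> D"
    using assms(2) \<open>x \<in> D\<close> by blast
qed

lemma closedin_antichain:
  assumes "A \<subseteq> T" and antichain: "\<And>a b. \<lbrakk>a \<in> A; b \<in> A; a \<sqsubseteq> b\<rbrakk> \<Longrightarrow> a = b"
  shows "closedin tree_topology A"
proof -
  have "\<exists>U. openin tree_topology U \<and> z \<in> U \<and> U \<subseteq> T - A" if z: "z \<in> T - A" for z
  proof (cases "\<exists>a\<in>A. a \<sqsubset> z")
    case True
    then obtain a where "a \<in> A" "a \<sqsubset> z" by blast
    moreover have "Ioc a z \<inter> A = {}"
      using \<open>a \<in> A\<close> antichain unfolding strict_def by blast
    ultimately show ?thesis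
      using openin_Ioc[of a z] z assms(1) tree_refl by blast
  next
    case False
    obtain U where "openin tree_topology U" "z \<in> U" "U \<subseteq> {w \<in> T. w \<sqsubseteq> z}"
      using openin_neighbourhood_below z by blast
    moreover have "{w \<in> T. w \<sqsubseteq> z} \<inter> A = {}"
      using False z unfolding strict_def by blast
    ultimately show ?thesis by blast
  qed
  then have "openin tree_topology (T - A)" by (subst openin_subopen) blast
  then show ?thesis using assms(1) by (simp add: closedin_def)
qed


lemma down_set_eventually_disjoint:
  assumes closed: "\<And>n. closedin tree_topology (F n)" and "decseq F" and "\<Inter>(range F) = {}"
    and x: "x \<in> T"
  shows "\<exists>n. \<forall>z\<in>T. z \<sqsubseteq> x \<longrightarrow> z \<notin> F n"
proof (rule ccontr)
  assume "\<nexists>n. \<forall>z\<in>T. z \<sqsubseteq> x \<longrightarrow> z \<notin> F n"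
  define S where "S = {c \<in> T. c \<sqsubseteq> x \<and> (\<forall>n. \<exists>w\<in>T. w \<sqsubseteq> c \<and> w \<in> F n)}"
  have "x \<in> S" unfolding S_def using \<open>\<nexists>n. _\<close> x tree_refl by blast
  then obtain c where "c \<in> S" and c_minimal: "\<And>s. s \<in> S \<Longrightarrow> \<not> s \<sqsubset> c"
    using down_set_has_minimal[OF x, of S] unfolding S_def by blast
  then have cT: "c \<in> T" and "c \<sqsubseteq> x" and below_c: "\<And>n. \<exists>w\<in>T. w \<sqsubseteq> c \<and> w \<in> F n"
    unfolding S_def by auto
  obtain N where N: "c \<notin> F N" using \<open>\<Inter>(range F) = {}\<close> by blast
  have "\<not> minimal_in T le c"
    using below_c[of N] N unfolding minimal_in_def by blast
  moreover have "openin tree_topology (T - F N)"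
    using closed[of N] by (simp add: closedin_def)
  ultimately obtain s where sT: "s \<in> T" and "s \<sqsubset> c" and gap: "Ioc s c \<inter> F N = {}"
    using openin_contains_Ioc[of "T - F N" c] cT N by blast
  \<comment> \<open>Every \<open>w \<sqsubseteq> c\<close> in \<open>F N\<close> lies strictly below \<open>c\<close> but not in \<open>(s, c]\<close>, hence below \<open>s\<close>.\<close>
  have "\<exists>w\<in>T. w \<sqsubseteq> s \<and> w \<in> F n" for n
  proof -
    obtain w where w: "w \<in> T" "w \<sqsubseteq> c" "w \<in> F (max n N)" using below_c by blast
    moreover have "F (max n N) \<subseteq> F n \<inter> F N" using \<open>decseq F\<close> unfolding decseq_def by simp
    ultimately have "w \<in> F n" "w \<in> F N" by auto
    then have "w \<sqsubset> c" and "\<not> s \<sqsubset> w" using w N gap unfolding strict_def by auto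
    then have "w \<sqsubseteq> s"
      using predecessors_comparable[OF cT sT w(1) \<open>s \<sqsubset> c\<close>] tree_refl[OF sT]
      unfolding strict_def by auto
    then show ?thesis using w(1) \<open>w \<in> F n\<close> by blast
  qed
  moreover have "s \<sqsubseteq> x"
    using strict_le_trans[OF sT cT x \<open>s \<sqsubset> c\<close> \<open>c \<sqsubseteq> x\<close>] unfolding strict_def by blast
  ultimately have "s \<in> S" unfolding S_def using sT by blast
  then show False using c_minimal \<open>s \<sqsubset> c\<close> by blast
qed

lemma normal_rank_superlevel_expansions:
  fixes m :: "'a \<Rightarrow> nat"
  assumes normal: "normal_space tree_topology"
    and mono: "\<And>x z. \<lbrakk>x \<in> T; z \<in> T; z \<sqsubseteq> x\<rbrakk> \<Longrightarrow> m z \<le> m x"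
  obtains G where "\<And>n. openin tree_topology (G n)" "\<And>n. {x \<in> T. n < m x} \<subseteq> G n"
    "\<Inter>(range G) = {}"
proof -
  define Up where "Up n = {x \<in> T. n < m x}" for n
  define Jump where "Jump j = {x \<in> T. m x = j \<and> (\<forall>z\<in>T. z \<sqsubset> x \<longrightarrow> m z < j)}" for j
  have closed_Up: "closedin tree_topology (Up n)" for n
  proof -
    have "openin tree_topology {x \<in> T. m x \<le> n}"
      by (rule openin_down_closed) (use mono in fastforce)+
    moreover have "T - Up n = {x \<in> T. m x \<le> n}" unfolding Up_def by auto
    ultimately show ?thesis unfolding closedin_def Up_def by auto
  qed
  have closed_Jump: "closedin tree_topology (Jump j)" for j
    by (rule closedin_antichain) (auto simp: Jump_def strict_def)
  have Jump_Up: "disjnt (Jump j) (Up j)" for j unfolding Jump_def Up_def disjnt_def by auto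
  have Jump_below: "\<And>i j. i < j \<Longrightarrow> Jump j \<subseteq> Up i" unfolding Jump_def Up_def by auto
  obtain Q where open_Q: "\<And>j. openin tree_topology (Q j)"
    and Jump_Q: "\<And>j. Jump j \<subseteq> Q j" and disjoint_Q: "\<And>i j. i \<noteq> j \<Longrightarrow> disjnt (Q i) (Q j)"
    using normal_space_pairwise_disjoint_expansions[where A = Jump and B = Up,
        OF normal closed_Jump closed_Up Jump_Up Jump_below]
    by blast
  define G where "G n = Up n \<union> (\<Union>j\<in>{n<..}. Q j)" for n
  have "openin tree_topology (G n)" for n
  proof (subst openin_subopen, intro ballI)
    fix y assume "y \<in> G n"
    show "\<exists>W. openin tree_topology W \<and> y \<in> W \<and> W \<subseteq> G n"
    proof (cases "y \<in> Up n")
      case False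
      then obtain j where "n < j" "y \<in> Q j" using \<open>y \<in> G n\<close> unfolding G_def by blast
      then show ?thesis using open_Q unfolding G_def by blast
    next
      case True
      then have yT: "y \<in> T" and "n < m y" unfolding Up_def by auto
      show ?thesis
      proof (cases "\<exists>z\<in>T. z \<sqsubset> y \<and> n < m z")
        case True
        then obtain z where z: "z \<in> T" "z \<sqsubset> y" "n < m z" by blast
        then have "Ioc z y \<subseteq> Up n" using mono unfolding Up_def strict_def by fastforce
        moreover have "y \<in> Ioc z y" using z(2) yT tree_refl[OF yT] by simp
        ultimately show ?thesis using openin_Ioc[OF z(1) yT] unfolding G_def by blast
      next
        case False
        then have "y \<in> Jump (m y)" using yT \<open>n < m y\<close> unfolding Jump_def by auto
        then show ?thesis using Jump_Q open_Q \<open>n < m y\<close> unfolding G_def by blast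
      qed
    qed
  qed
  moreover have "{x \<in> T. n < m x} \<subseteq> G n" for n unfolding G_def Up_def by blast
  moreover have "\<Inter>(range G) = {}"
  proof (rule equals0I)
    fix y assume y: "y \<in> \<Inter>(range G)"
    have "y \<notin> Up (m y)" unfolding Up_def by simp
    then obtain j where "m y < j" "y \<in> Q j" using y unfolding G_def by blast
    then have "y \<notin> Up j" unfolding Up_def by simp
    then obtain k where "j < k" "y \<in> Q k" using y unfolding G_def by blast
    then show False using disjoint_Q[of j k] \<open>y \<in> Q j\<close> unfolding disjnt_def by blast
  qed
  ultimately show ?thesis using that by blast
qed

lemma normal_open_expansions:
  assumes normal: "normal_space tree_topology"
    and closed: "\<And>n. closedin tree_topology (F n)" and "decseq F" and "\<Inter>(range F) = {}"
  shows "\<exists>G. (\<forall>n. openin tree_topology (G n)) \<and> (\<forall>n. F n \<subseteq> G n) \<and> \<Inter>(range G) = {}"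
proof -
  define m where "m x = (LEAST n. \<forall>z\<in>T. z \<sqsubseteq> x \<longrightarrow> z \<notin> F n)" for x
  have m_avoids: "\<forall>z\<in>T. z \<sqsubseteq> x \<longrightarrow> z \<notin> F (m x)" if "x \<in> T" for x
    unfolding m_def
    by (rule LeastI_ex) (rule down_set_eventually_disjoint[OF closed \<open>decseq F\<close> \<open>\<Inter>(range F) = {}\<close> that])
  have m_mono: "\<And>x z. \<lbrakk>x \<in> T; z \<in> T; z \<sqsubseteq> x\<rbrakk> \<Longrightarrow> m z \<le> m x"
  proof -
    fix x z assume x: "x \<in> T" and z: "z \<in> T" "z \<sqsubseteq> x"
    have "\<forall>w\<in>T. w \<sqsubseteq> z \<longrightarrow> w \<notin> F (m x)"
    proof (intro ballI impI)
      fix w assume "w \<in> T" "w \<sqsubseteq> z"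
      then have "w \<sqsubseteq> x" using tree_trans[OF \<open>w \<in> T\<close> z(1) x] z(2) by blast
      then show "w \<notin> F (m x)" using m_avoids[OF x] \<open>w \<in> T\<close> by blast
    qed
    then show "m z \<le> m x" unfolding m_def[of z] by (rule Least_le)
  qed
  obtain G where "\<And>n. openin tree_topology (G n)"
    and superlevel_G: "\<And>n. {x \<in> T. n < m x} \<subseteq> G n" and "\<Inter>(range G) = {}"
    using normal_rank_superlevel_expansions[where m = m, OF normal m_mono] by blast
  moreover have "F n \<subseteq> G n" for n
  proof
    fix y assume y: "y \<in> F n"
    then have yT: "y \<in> T" using closedin_subset[OF closed[of n]] by auto
    have "n < m y"
    proof (rule ccontr)
      assume "\<not> n < m y"
      then have "F n \<subseteq> F (m y)" using \<open>decseq F\<close> by (simp add: decseq_def)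
      then show False using m_avoids[OF yT] yT y tree_refl by blast
    qed
    then show "y \<in> G n" using superlevel_G yT by blast
  qed
  ultimately show ?thesis by blast
qed

end

theorem corollary4p21:
  fixes T :: "'a set" and le :: "'a \<Rightarrow> 'a \<Rightarrow> bool"
  assumes "is_tree T le"
    and "pseudo_sups_are_sups T le"
    and "normal_space (interval_topology T le)"
  shows "countably_paracompact (interval_topology T le)"
proof -
  interpret tree T le by (rule tree.intro) (rule assms(1))
  show ?thesis
    using assms(3) normal_open_expansions[OF assms(3)]
    by (rule countably_paracompact_if_normal_open_expansions)
qed

end
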